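(* Let $\mathbb{F}$ be a field, $n\ge1$ and $k\ge2$. The maps $\mathcal{F}\mapsto\varphi(\mathcal{F})$ and $S\mapsto\psi(S)$ are mutually inverse bijections between the set of all flags in $\mathbb{F}^n$ of length $k$ and the set of all $k$-maximal nilpotent subsemigroups of $M(n,\mathbb{F})$.
   Context: $M(n,\mathbb{F})$ is the semigroup of $n\times n$ matrices over $\mathbb{F}$, identified with linear operators on $\mathbb{F}^n$. A flag of length $k$ is a chain $0=V_0\subsetneq V_1\subsetneq\cdots\subsetneq V_k=\mathbb{F}^n$ of subspaces; $\varphi(\mathcal{F})=\{a\in M(n,\mathbb{F}) : a(V_i)\subseteq V_{i-1}\ \forall i\}$. A semigroup $S$ with zero is nilpotent of nilpotency degree $k$ if all products of $k$ elements vanish and some product of $k-1$ elements does not. For a nilpotent subsemigroup $S$ of nilpotency degree $k$, with $S^i(\mathbb{F}^n)=\{a_1\cdots a_i(v): a_j\in S, v\in\mathbb{F}^n\}$ and $\langle\cdot\rangle$ the linear span, $\psi(S)$ is the flag $0\subset\langle S^{k-1}(\mathbb{F}^n)\rangle\subset\cdots\subset\langle S(\mathbb{F}^n)\rangle\subset\mathbb{F}^n$. A nilpotent subsemigroup of nilpotency degree $k$ is $k$-maximal if it is not properly contained in another nilpotent subsemigroup of $M(n,\mathbb{F})$ of nilpotency degree $k$. *)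

theory Defs
  imports "HOL-Analysis.Analysis"
begin

text \<open>Matrices in M(n,F) are elements of type 'a^'n^'n ('a a field, 'n a finite
  index type with CARD('n) = n), acting on F^n = 'a^'n via (*v).\<close>

definition is_flag :: "nat \<Rightarrow> ('a::field ^ 'n) set list \<Rightarrow> bool" where
  "is_flag k Vs \<longleftrightarrow> length Vs = k + 1 \<and>
     (\<forall>i\<le>k. vec.subspace (Vs ! i)) \<and>
     Vs ! 0 = {0} \<and> Vs ! k = UNIV \<and>
     (\<forall>i<k. Vs ! i \<subset> Vs ! (Suc i))"

definition phi :: "('a::field ^ 'n) set list \<Rightarrow> ('a ^ 'n ^ 'n) set" where
  "phi Vs = {a. \<forall>i\<in>{1..<length Vs}. (\<lambda>v. a *v v) ` (Vs ! i) \<subseteq> Vs ! (i - 1)}"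

definition mprod :: "('a::field ^ 'n ^ 'n) list \<Rightarrow> 'a ^ 'n ^ 'n" where
  "mprod xs = foldr (**) xs (mat 1)"

definition subsemigroup :: "('a::field ^ 'n ^ 'n) set \<Rightarrow> bool" where
  "subsemigroup S \<longleftrightarrow> (\<forall>a\<in>S. \<forall>b\<in>S. a ** b \<in> S)"

definition nilpotent_of_degree :: "nat \<Rightarrow> ('a::field ^ 'n ^ 'n) set \<Rightarrow> bool" where
  "nilpotent_of_degree k S \<longleftrightarrow> subsemigroup S \<and>
     (\<forall>xs. length xs = k \<and> set xs \<subseteq> S \<longrightarrow> mprod xs = 0) \<and>
     (\<exists>xs. length xs = k - 1 \<and> set xs \<subseteq> S \<and> mprod xs \<noteq> 0)"

definition k_maximal :: "nat \<Rightarrow> ('a::field ^ 'n ^ 'n) set \<Rightarrow> bool" where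
  "k_maximal k S \<longleftrightarrow> nilpotent_of_degree k S \<and>
     \<not> (\<exists>T. nilpotent_of_degree k T \<and> S \<subset> T)"

definition Spow_image :: "('a::field ^ 'n ^ 'n) set \<Rightarrow> nat \<Rightarrow> ('a ^ 'n) set" where
  "Spow_image S i = {mprod xs *v v | xs v. length xs = i \<and> set xs \<subseteq> S}"

definition psi :: "nat \<Rightarrow> ('a::field ^ 'n ^ 'n) set \<Rightarrow> ('a ^ 'n) set list" where
  "psi k S = map (\<lambda>i. vec.span (Spow_image S (k - i))) [0..<k+1]"

end

theory Submission
  imports Defs
begin

(* Every a in phi(V) maps V_i into V_(i-1), and a vector outside V_m can be sent to any vector
   of V_m by such an a (take a map that kills V_m and has image in V_m). By induction, the
   products of i elements of phi(V) sweep out exactly V_(k-i); hence psi(phi(V)) = V and phi(V)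
   is nilpotent of degree k. Conversely, for S nilpotent of degree k the span of S^(i+1)(F^n) is
   determined by the span of S^i(F^n), so the chain of spans cannot stall before it reaches 0 at
   step k: psi(S) is a flag, and S is contained in phi(psi(S)). Finally phi(V) <= phi(W) forces
   V = W for flags of length k, which makes every phi(V) k-maximal and every k-maximal S equal to
   phi(psi(S)). *)

lemma mprod_Nil [simp]: "mprod [] = mat 1"
  by (simp add: mprod_def)

lemma mprod_Cons [simp]: "mprod (a # xs) = a ** mprod xs"
  by (simp add: mprod_def)

lemma mprod_append: "mprod (xs @ ys) = mprod xs ** mprod ys"
  by (induction xs) (simp_all add: matrix_mul_assoc)

lemma exists_matrix_annihilating_subspace:
  fixes U :: "('a::field ^ 'n) set"
  assumes U: "vec.subspace U" and w: "w \<notin> U" and u: "u \<in> U"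
  shows "\<exists>a::'a^'n^'n. a *v w = u \<and> (\<forall>v\<in>U. a *v v = 0) \<and> (\<forall>v. a *v v \<in> U)"
proof -
  obtain B where B: "B \<subseteq> U" "vec.independent B" "U \<subseteq> vec.span B"
    using vec.maximal_independent_subset_extend[of "{}" U] vec.independent_empty by auto
  have span_B: "vec.span B = U"
    using B U vec.span_minimal by blast
  have "w \<notin> B"
    using w B by auto
  have "vec.independent (insert w B)"
    using B(2) w span_B by (simp add: vec.independent_insert)
  from vec.linear_independent_extend_subspace[OF this, where f = "\<lambda>x. if x = w then u else 0"]
  obtain g where g: "Vector_Spaces.linear (*s) (*s) g"
      "\<forall>x\<in>insert w B. g x = (if x = w then u else 0)"
      "range g = vec.span ((\<lambda>x. if x = w then u else 0) ` insert w B)"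
    by blast
  have range: "range g \<subseteq> U"
    unfolding g(3) by (rule vec.span_minimal) (use U u vec.subspace_0 in auto)
  have "g x = 0" if "x \<in> B" for x
    using g(2) \<open>w \<notin> B\<close> that by auto
  then have kernel: "\<forall>v\<in>U. g v = 0"
    using vec.linear_eq_0_on_span[OF g(1)] span_B by blast
  show ?thesis
    using matrix_works[OF g(1)] g(2) range kernel by (intro exI[of _ "matrix g"]) auto
qed

lemma is_flagD:
  assumes "is_flag k Vs"
  shows "length Vs = Suc k" "Vs ! 0 = {0}" "Vs ! k = UNIV"
    and "i \<le> k \<Longrightarrow> vec.subspace (Vs ! i)"
    and "i < k \<Longrightarrow> Vs ! i \<subset> Vs ! Suc i"
  using assms unfolding is_flag_def by auto

lemma is_flag_pos:
  assumes "is_flag k (Vs :: ('a::field ^ 'n) set list)"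
  shows "0 < k"
proof (rule ccontr)
  assume "\<not> 0 < k"
  then have "(UNIV :: ('a ^ 'n) set) = {0}"
    using is_flagD(2,3)[OF assms] by simp
  moreover have "(1 :: 'a ^ 'n) \<noteq> 0"
    by (simp add: vec_eq_iff)
  ultimately show False
    by (metis UNIV_I singletonD)
qed

lemma flag_mono:
  assumes "is_flag k Vs" "i \<le> j" "j \<le> k"
  shows "Vs ! i \<subseteq> Vs ! j"
  using assms(2,3)
proof (induction j rule: dec_induct)
  case (step j)
  then show ?case
    using is_flagD(5)[OF assms(1), of j] by auto
qed simp

lemma mem_phi_iff:
  assumes "length Vs = Suc k"
  shows "a \<in> phi Vs \<longleftrightarrow> (\<forall>i<k. (\<lambda>v. a *v v) ` (Vs ! Suc i) \<subseteq> Vs ! i)"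
proof -
  have "{1..<length Vs} = Suc ` {..<k}"
    using assms by (simp add: lessThan_atLeast0)
  then show ?thesis
    unfolding phi_def by auto
qed

lemma phi_lowers_flag:
  assumes F: "is_flag k Vs" and "a \<in> phi Vs" "i < k" "v \<in> Vs ! Suc i"
  shows "a *v v \<in> Vs ! i"
  using assms mem_phi_iff[OF is_flagD(1)[OF F]] by blast

lemma exists_phi_map:
  assumes F: "is_flag k Vs" and m: "m < k" and w: "w \<notin> Vs ! m" and u: "u \<in> Vs ! m"
  shows "\<exists>a\<in>phi Vs. a *v w = u"
proof -
  obtain a where a: "a *v w = u" "\<forall>v\<in>Vs ! m. a *v v = 0" "\<forall>v. a *v v \<in> Vs ! m"
    using exists_matrix_annihilating_subspace[OF is_flagD(4)[OF F] w u] m by auto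
  have "(\<lambda>v. a *v v) ` (Vs ! Suc i) \<subseteq> Vs ! i" if "i < k" for i
  proof (cases "i < m")
    case True
    then have "Vs ! Suc i \<subseteq> Vs ! m"
      using flag_mono[OF F] m by simp
    then show ?thesis
      using a(2) vec.subspace_0[OF is_flagD(4)[OF F]] that by force
  next
    case False
    then show ?thesis
      using a(3) flag_mono[OF F, of m i] that by auto
  qed
  then show ?thesis
    using a(1) mem_phi_iff[OF is_flagD(1)[OF F]] by blast
qed

lemma Spow_image_0 [simp]: "Spow_image S 0 = UNIV"
  unfolding Spow_image_def by auto

lemma Spow_image_Suc:
  "Spow_image S (Suc i) = (\<Union>a\<in>S. (\<lambda>v. a *v v) ` Spow_image S i)"
proof (intro equalityI subsetI)
  fix x
  assume "x \<in> Spow_image S (Suc i)"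
  then obtain xs v where "x = mprod xs *v v" "length xs = Suc i" "set xs \<subseteq> S"
    unfolding Spow_image_def by blast
  then obtain a ys where "x = a *v (mprod ys *v v)" "a \<in> S" "length ys = i" "set ys \<subseteq> S"
    by (cases xs) (auto simp: matrix_vector_mul_assoc)
  then show "x \<in> (\<Union>a\<in>S. (\<lambda>v. a *v v) ` Spow_image S i)"
    unfolding Spow_image_def by blast
next
  fix x
  assume "x \<in> (\<Union>a\<in>S. (\<lambda>v. a *v v) ` Spow_image S i)"
  then obtain a ys v where "x = a *v (mprod ys *v v)" "a \<in> S" "length ys = i" "set ys \<subseteq> S"
    unfolding Spow_image_def by blast
  then have "x = mprod (a # ys) *v v" "length (a # ys) = Suc i" "set (a # ys) \<subseteq> S"
    by (simp_all add: matrix_vector_mul_assoc)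
  then show "x \<in> Spow_image S (Suc i)"
    unfolding Spow_image_def by blast
qed

lemma Spow_image_antimono:
  assumes "i \<le> j"
  shows "Spow_image S j \<subseteq> Spow_image S i"
proof
  fix x
  assume "x \<in> Spow_image S j"
  then obtain xs v where x: "x = mprod xs *v v" "length xs = j" "set xs \<subseteq> S"
    unfolding Spow_image_def by blast
  then have "x = mprod (take i xs) *v (mprod (drop i xs) *v v)"
    by (metis append_take_drop_id matrix_vector_mul_assoc mprod_append)
  moreover have "length (take i xs) = i" "set (take i xs) \<subseteq> S"
    using x assms by (auto dest: in_set_takeD)
  ultimately show "x \<in> Spow_image S i"
    unfolding Spow_image_def by blast
qed

lemma Spow_image_mono: "S \<subseteq> T \<Longrightarrow> Spow_image S i \<subseteq> Spow_image T i"
  unfolding Spow_image_def by blast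

lemma Spow_image_subset_zero_iff:
  "Spow_image S i \<subseteq> {0} \<longleftrightarrow> (\<forall>xs. length xs = i \<and> set xs \<subseteq> S \<longrightarrow> mprod xs = 0)"
  unfolding Spow_image_def by (auto simp: matrix_eq)

lemma nilpotent_of_degree_iff:
  "nilpotent_of_degree k S \<longleftrightarrow>
     subsemigroup S \<and> Spow_image S k \<subseteq> {0} \<and> \<not> Spow_image S (k - 1) \<subseteq> {0}"
  unfolding nilpotent_of_degree_def Spow_image_subset_zero_iff by blast

lemma span_Spow_image_Suc:
  "vec.span (Spow_image S (Suc i)) = vec.span (\<Union>a\<in>S. (\<lambda>v. a *v v) ` vec.span (Spow_image S i))"
proof (rule antisym)
  have "Spow_image S (Suc i) \<subseteq> (\<Union>a\<in>S. (\<lambda>v. a *v v) ` vec.span (Spow_image S i))"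
    unfolding Spow_image_Suc using vec.span_superset by blast
  then show "vec.span (Spow_image S (Suc i)) \<subseteq> vec.span (\<Union>a\<in>S. (\<lambda>v. a *v v) ` vec.span (Spow_image S i))"
    by (rule vec.span_mono)
  have "(\<lambda>v. a *v v) ` vec.span (Spow_image S i) \<subseteq> vec.span (Spow_image S (Suc i))" if "a \<in> S" for a
  proof -
    have "(\<lambda>v. a *v v) ` vec.span (Spow_image S i) = vec.span ((\<lambda>v. a *v v) ` Spow_image S i)"
      by (rule vec.span_image[symmetric])
    also have "\<dots> \<subseteq> vec.span (Spow_image S (Suc i))"
      using that by (intro vec.span_mono) (auto simp: Spow_image_Suc)
    finally show ?thesis .
  qed
  then show "vec.span (\<Union>a\<in>S. (\<lambda>v. a *v v) ` vec.span (Spow_image S i)) \<subseteq> vec.span (Spow_image S (Suc i))"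
    by (intro vec.span_minimal UN_least) simp_all
qed

lemma span_Spow_image_stable:
  assumes eq: "vec.span (Spow_image S (Suc i)) = vec.span (Spow_image S i)" and "i \<le> j"
  shows "vec.span (Spow_image S j) = vec.span (Spow_image S i)"
  using assms(2)
proof (induction j rule: dec_induct)
  case (step j)
  have "vec.span (Spow_image S (Suc j)) = vec.span (\<Union>a\<in>S. (\<lambda>v. a *v v) ` vec.span (Spow_image S j))"
    by (rule span_Spow_image_Suc)
  also have "\<dots> = vec.span (Spow_image S (Suc i))"
    by (simp only: step.IH span_Spow_image_Suc)
  finally show ?case
    using eq by simp
qed simp

lemma nilpotent_span_Spow_image_strict:
  assumes N: "nilpotent_of_degree k S" and "i < k"
  shows "vec.span (Spow_image S (Suc i)) \<subset> vec.span (Spow_image S i)"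
proof -
  have "vec.span (Spow_image S (Suc i)) \<subseteq> vec.span (Spow_image S i)"
    by (intro vec.span_mono Spow_image_antimono) simp
  moreover have "vec.span (Spow_image S (Suc i)) \<noteq> vec.span (Spow_image S i)"
  proof
    assume "vec.span (Spow_image S (Suc i)) = vec.span (Spow_image S i)"
    then have "vec.span (Spow_image S (k - 1)) = vec.span (Spow_image S k)"
      using span_Spow_image_stable[of S i "k - 1"] span_Spow_image_stable[of S i k] \<open>i < k\<close> by simp
    also have "\<dots> \<subseteq> {0}"
      using N vec.span_minimal vec.subspace_single_0 unfolding nilpotent_of_degree_iff by blast
    finally show False
      using N vec.span_superset unfolding nilpotent_of_degree_iff by blast
  qed
  ultimately show ?thesis
    by blast
qed

lemma psi_nth:
  assumes "i \<le> k"
  shows "psi k S ! i = vec.span (Spow_image S (k - i))"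
  using assms unfolding psi_def by (simp del: upt_Suc add: nth_append)

lemma Spow_image_phi:
  assumes F: "is_flag k Vs" and "i \<le> k"
  shows "Spow_image (phi Vs) i = Vs ! (k - i)"
  using assms(2)
proof (induction i)
  case 0
  then show ?case
    using is_flagD(3)[OF F] by simp
next
  case (Suc i)
  define m where "m = k - Suc i"
  have m: "m < k" "k - i = Suc m"
    using Suc.prems unfolding m_def by auto
  show ?case
  proof (intro equalityI subsetI)
    fix x
    assume "x \<in> Spow_image (phi Vs) (Suc i)"
    then obtain a w where "a \<in> phi Vs" "w \<in> Vs ! Suc m" "x = a *v w"
      using Suc m unfolding Spow_image_Suc by auto
    then show "x \<in> Vs ! (k - Suc i)"
      using phi_lowers_flag[OF F] m(1) unfolding m_def by blast
  next
    fix u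
    assume "u \<in> Vs ! (k - Suc i)"
    moreover obtain w where w: "w \<in> Vs ! Suc m" "w \<notin> Vs ! m"
      using is_flagD(5)[OF F m(1)] by blast
    ultimately obtain a where "a \<in> phi Vs" "a *v w = u"
      using exists_phi_map[OF F m(1) w(2)] unfolding m_def by blast
    then show "u \<in> Spow_image (phi Vs) (Suc i)"
      unfolding Spow_image_Suc using Suc w m by auto
  qed
qed

lemma psi_phi:
  assumes F: "is_flag k Vs"
  shows "psi k (phi Vs) = Vs"
proof (rule nth_equalityI)
  show "length (psi k (phi Vs)) = length Vs"
    using is_flagD(1)[OF F] unfolding psi_def by simp
next
  fix i
  assume "i < length (psi k (phi Vs))"
  then have "i \<le> k"
    unfolding psi_def by simp
  then have "psi k (phi Vs) ! i = vec.span (Spow_image (phi Vs) (k - i))"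
    by (rule psi_nth)
  also have "\<dots> = vec.span (Vs ! i)"
    using Spow_image_phi[OF F, of "k - i"] \<open>i \<le> k\<close> by simp
  also have "\<dots> = Vs ! i"
    using is_flagD(4)[OF F \<open>i \<le> k\<close>] by simp
  finally show "psi k (phi Vs) ! i = Vs ! i" .
qed

lemma phi_nilpotent:
  assumes F: "is_flag k Vs"
  shows "nilpotent_of_degree k (phi Vs)"
  unfolding nilpotent_of_degree_iff
proof (intro conjI)
  show "subsemigroup (phi Vs)"
    unfolding subsemigroup_def
  proof (intro ballI)
    fix a b
    assume "a \<in> phi Vs" "b \<in> phi Vs"
    have "(a ** b) *v v \<in> Vs ! i" if "i < k" "v \<in> Vs ! Suc i" for i v
    proof -
      have "b *v v \<in> Vs ! Suc i"
        using phi_lowers_flag[OF F \<open>b \<in> phi Vs\<close> that] is_flagD(5)[OF F \<open>i < k\<close>] by blast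
      then show ?thesis
        using phi_lowers_flag[OF F \<open>a \<in> phi Vs\<close> \<open>i < k\<close>] by (simp add: matrix_vector_mul_assoc[symmetric])
    qed
    then show "a ** b \<in> phi Vs"
      unfolding mem_phi_iff[OF is_flagD(1)[OF F]] by blast
  qed
  show "Spow_image (phi Vs) k \<subseteq> {0}"
    using Spow_image_phi[OF F] is_flagD(2)[OF F] by simp
  have "Vs ! 0 \<subset> Vs ! 1"
    using is_flagD(5)[OF F] is_flag_pos[OF F] by simp
  then show "\<not> Spow_image (phi Vs) (k - 1) \<subseteq> {0}"
    using Spow_image_phi[OF F, of "k - 1"] is_flagD(2)[OF F] is_flag_pos[OF F] by simp
qed

lemma psi_is_flag:
  assumes N: "nilpotent_of_degree k S"
  shows "is_flag k (psi k S)"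
  unfolding is_flag_def
proof (intro conjI allI impI)
  show "length (psi k S) = k + 1"
    unfolding psi_def by simp
  show "vec.subspace (psi k S ! i)" if "i \<le> k" for i
    using psi_nth[OF that, of S] by simp
  have "Spow_image S k \<subseteq> {0}"
    using N unfolding nilpotent_of_degree_iff by blast
  then have "vec.span (Spow_image S k) \<subseteq> {0}"
    using vec.span_mono[of _ "{0}"] by simp
  then show "psi k S ! 0 = {0}"
    using psi_nth[of 0 k S] vec.span_zero by auto
  show "psi k S ! k = UNIV"
    using psi_nth[of k k S] by simp
  show "psi k S ! i \<subset> psi k S ! Suc i" if "i < k" for i
    using nilpotent_span_Spow_image_strict[OF N, of "k - Suc i"] psi_nth[of i k S] psi_nth[of "Suc i" k S] that
    by (simp add: Suc_diff_Suc)
qed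

lemma subset_phi_psi: "S \<subseteq> phi (psi k S)"
proof
  fix a
  assume "a \<in> S"
  have "a *v v \<in> psi k S ! i" if "i < k" "v \<in> psi k S ! Suc i" for i v
  proof -
    have "v \<in> vec.span (Spow_image S (k - Suc i))"
      using psi_nth[of "Suc i" k S] that by simp
    then have "a *v v \<in> vec.span (Spow_image S (Suc (k - Suc i)))"
      unfolding span_Spow_image_Suc using \<open>a \<in> S\<close> by (blast intro: vec.span_base)
    then show ?thesis
      using psi_nth[of i k S] that by (simp add: Suc_diff_Suc)
  qed
  moreover have "length (psi k S) = Suc k"
    unfolding psi_def by simp
  ultimately show "a \<in> phi (psi k S)"
    using mem_phi_iff by blast
qed

lemma phi_subset_imp_nth_subset:
  assumes V: "is_flag k V" and W: "is_flag k W" and sub: "phi V \<subseteq> phi W" and "i \<le> k"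
  shows "V ! i \<subseteq> W ! i"
proof -
  have "V ! i = Spow_image (phi V) (k - i)"
    using Spow_image_phi[OF V, of "k - i"] \<open>i \<le> k\<close> by simp
  also have "\<dots> \<subseteq> Spow_image (phi W) (k - i)"
    by (rule Spow_image_mono[OF sub])
  also have "\<dots> = W ! i"
    using Spow_image_phi[OF W, of "k - i"] \<open>i \<le> k\<close> by simp
  finally show ?thesis .
qed

lemma phi_subset_imp_eq:
  assumes V: "is_flag k V" and W: "is_flag k W" and sub: "phi V \<subseteq> phi W"
  shows "V = W"
proof -
  have "W ! i \<subseteq> V ! i" if "i \<le> k" for i
    using that
  proof (induction i)
    case 0
    then show ?case
      using is_flagD(2)[OF V] is_flagD(2)[OF W] by simp
  next
    case (Suc i)
    show ?case
    proof
      fix w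
      assume w: "w \<in> W ! Suc i"
      show "w \<in> V ! Suc i"
      proof (rule ccontr)
        assume w_notin: "w \<notin> V ! Suc i"
        then have "Suc i < k"
          using Suc.prems is_flagD(3)[OF V] by (cases "Suc i = k") auto
        have "V ! i \<subset> V ! Suc i"
          using is_flagD(5)[OF V] Suc.prems by simp
        then obtain u where u: "u \<in> V ! Suc i" "u \<notin> V ! i"
          by blast
        then obtain a where "a \<in> phi V" "a *v w = u"
          using exists_phi_map[OF V \<open>Suc i < k\<close> w_notin] by blast
        then have "u \<in> W ! i"
          using phi_lowers_flag[OF W _ _ w] sub Suc.prems by auto
        then show False
          using Suc u by auto
      qed
    qed
  qed
  then show ?thesis
    using phi_subset_imp_nth_subset[OF V W sub] is_flagD(1)[OF V] is_flagD(1)[OF W]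
    by (intro nth_equalityI) (auto simp: less_Suc_eq_le)
qed

lemma phi_k_maximal:
  assumes F: "is_flag k Vs"
  shows "k_maximal k (phi Vs)"
  unfolding k_maximal_def
proof (intro conjI notI)
  show "nilpotent_of_degree k (phi Vs)"
    using phi_nilpotent[OF F] .
  assume "\<exists>T. nilpotent_of_degree k T \<and> phi Vs \<subset> T"
  then obtain T where T: "nilpotent_of_degree k T" "phi Vs \<subset> T"
    by blast
  then have "Vs = psi k T"
    using phi_subset_imp_eq[OF F psi_is_flag[OF T(1)]] subset_phi_psi[of T k] by blast
  then show False
    using T(2) subset_phi_psi[of T k] by blast
qed

lemma k_maximal_phi_psi:
  assumes "k_maximal k S"
  shows "phi (psi k S) = S"
  using assms phi_nilpotent[OF psi_is_flag] subset_phi_psi[of S k]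
  unfolding k_maximal_def by blast

theorem corollary9:
  fixes k :: nat
  assumes "k \<ge> 2"
  shows "(phi :: ('a::field ^ 'n) set list \<Rightarrow> _) ` {Vs. is_flag k Vs} = {S. k_maximal k S}
    \<and> (\<forall>Vs. is_flag k Vs \<longrightarrow> psi k (phi Vs) = (Vs :: ('a::field ^ 'n) set list))
    \<and> (\<forall>S. k_maximal k S \<longrightarrow> psi k S \<in> {Vs. is_flag k Vs} \<and> phi (psi k S) = (S :: ('a ^ 'n ^ 'n) set))
    \<and> bij_betw phi {Vs. is_flag k Vs} {S :: ('a ^ 'n ^ 'n) set. k_maximal k S}"
proof -
  have psi_flag: "is_flag k (psi k S)" if "k_maximal k S" for S :: "('a ^ 'n ^ 'n) set"
    using that psi_is_flag unfolding k_maximal_def by blast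
  have image: "(phi :: ('a ^ 'n) set list \<Rightarrow> _) ` {Vs. is_flag k Vs} = {S. k_maximal k S}"
  proof
    show "phi ` {Vs. is_flag k Vs} \<subseteq> {S :: ('a ^ 'n ^ 'n) set. k_maximal k S}"
      using phi_k_maximal by blast
    show "{S. k_maximal k S} \<subseteq> (phi :: ('a ^ 'n) set list \<Rightarrow> _) ` {Vs. is_flag k Vs}"
      using psi_flag k_maximal_phi_psi by (metis image_eqI mem_Collect_eq subsetI)
  qed
  moreover have "inj_on (phi :: ('a ^ 'n) set list \<Rightarrow> _) {Vs. is_flag k Vs}"
    by (rule inj_onI) (metis psi_phi mem_Collect_eq)
  ultimately show ?thesis
    using psi_phi psi_flag k_maximal_phi_psi unfolding bij_betw_def by (intro conjI allI impI) simp_all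
qed

end
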